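(* Let $X$ be an $\omega$-well-filtered coherent $d$-space. If $X\times X$ is a Fréchet space, then $X$ is sober.
   Context: For a $T_0$ space $X$, the specialization order is $x\le y$ iff $x\in\overline{\{y\}}$; a subset is saturated if it is an upper set in this order. $X$ is a $d$-space if it is $T_0$, its specialization order is a dcpo, and every open set of $X$ is Scott open with respect to the specialization order. $X$ is $\omega$-well-filtered if for every countable filtered family $\mathcal F$ of compact saturated subsets of $X$ and every open $U$, $\bigcap\mathcal F\subseteq U$ implies $F\subseteq U$ for some $F\in\mathcal F$. $X$ is coherent if the intersection of any two compact saturated subsets is compact. A space is Fréchet if whenever $x$ lies in the closure of a set $A$, some sequence in $A$ converges to $x$. A $T_0$ space is sober if every irreducible closed set equals $\overline{\{x\}}$ for some point $x$. *)

theory Defs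
  imports "HOL-Analysis.Analysis"
begin

definition spec_le :: "'a topology \<Rightarrow> 'a \<Rightarrow> 'a \<Rightarrow> bool" where
  "spec_le X x y \<longleftrightarrow> x \<in> topspace X \<and> y \<in> topspace X \<and> x \<in> X closure_of {y}"

definition saturated_in :: "'a topology \<Rightarrow> 'a set \<Rightarrow> bool" where
  "saturated_in X A \<longleftrightarrow> A \<subseteq> topspace X \<and> (\<forall>x\<in>A. \<forall>y. spec_le X x y \<longrightarrow> y \<in> A)"

definition spec_directed :: "'a topology \<Rightarrow> 'a set \<Rightarrow> bool" where
  "spec_directed X D \<longleftrightarrow> D \<noteq> {} \<and> D \<subseteq> topspace X \<and>
     (\<forall>x\<in>D. \<forall>y\<in>D. \<exists>z\<in>D. spec_le X x z \<and> spec_le X y z)"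

definition spec_is_sup :: "'a topology \<Rightarrow> 'a set \<Rightarrow> 'a \<Rightarrow> bool" where
  "spec_is_sup X D s \<longleftrightarrow> s \<in> topspace X \<and> (\<forall>d\<in>D. spec_le X d s) \<and>
     (\<forall>u\<in>topspace X. (\<forall>d\<in>D. spec_le X d u) \<longrightarrow> spec_le X s u)"

definition spec_dcpo :: "'a topology \<Rightarrow> bool" where
  "spec_dcpo X \<longleftrightarrow> (\<forall>D. spec_directed X D \<longrightarrow> (\<exists>s. spec_is_sup X D s))"

definition spec_scott_open :: "'a topology \<Rightarrow> 'a set \<Rightarrow> bool" where
  "spec_scott_open X U \<longleftrightarrow> saturated_in X U \<and>
     (\<forall>D s. spec_directed X D \<longrightarrow> spec_is_sup X D s \<longrightarrow> s \<in> U \<longrightarrow> D \<inter> U \<noteq> {})"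

definition d_space :: "'a topology \<Rightarrow> bool" where
  "d_space X \<longleftrightarrow> t0_space X \<and> spec_dcpo X \<and> (\<forall>U. openin X U \<longrightarrow> spec_scott_open X U)"

definition filtered_compact_saturated :: "'a topology \<Rightarrow> 'a set set \<Rightarrow> bool" where
  "filtered_compact_saturated X \<F> \<longleftrightarrow> \<F> \<noteq> {} \<and>
     (\<forall>K\<in>\<F>. compactin X K \<and> saturated_in X K) \<and>
     (\<forall>A\<in>\<F>. \<forall>B\<in>\<F>. \<exists>C\<in>\<F>. C \<subseteq> A \<inter> B)"

definition omega_well_filtered :: "'a topology \<Rightarrow> bool" where
  "omega_well_filtered X \<longleftrightarrow>
     (\<forall>\<F> U. countable \<F> \<and> filtered_compact_saturated X \<F> \<and> openin X U \<and> \<Inter>\<F> \<subseteq> U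
        \<longrightarrow> (\<exists>F\<in>\<F>. F \<subseteq> U))"

definition coherent_space :: "'a topology \<Rightarrow> bool" where
  "coherent_space X \<longleftrightarrow>
     (\<forall>A B. compactin X A \<and> saturated_in X A \<and> compactin X B \<and> saturated_in X B
        \<longrightarrow> compactin X (A \<inter> B))"

definition frechet_space :: "'a topology \<Rightarrow> bool" where
  "frechet_space X \<longleftrightarrow>
     (\<forall>A x. A \<subseteq> topspace X \<and> x \<in> X closure_of A \<longrightarrow>
        (\<exists>f. (\<forall>n. f n \<in> A) \<and> limitin X f x sequentially))"

definition irreducible_closed :: "'a topology \<Rightarrow> 'a set \<Rightarrow> bool" where
  "irreducible_closed X A \<longleftrightarrow> closedin X A \<and> A \<noteq> {} \<and>
     (\<forall>B C. closedin X B \<and> closedin X C \<and> A \<subseteq> B \<union> C \<longrightarrow> A \<subseteq> B \<or> A \<subseteq> C)"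

definition sober_space :: "'a topology \<Rightarrow> bool" where
  "sober_space X \<longleftrightarrow> t0_space X \<and>
     (\<forall>A. irreducible_closed X A \<longrightarrow> (\<exists>x\<in>topspace X. A = X closure_of {x}))"

end

theory Submission
  imports Defs
begin

text \<open>
  Let \<open>A\<close> be irreducible closed. Since \<open>X\<close> is a d-space, it suffices to show that \<open>A\<close> is
  directed: its supremum then lies in \<open>A\<close> (closed sets are Scott closed) and generates it.
  Given \<open>a, b \<in> A\<close>, irreducibility puts \<open>(a, b)\<close> into the closure of the diagonal of \<open>A\<close>,
  so the Frechet property yields one sequence \<open>x\<^sub>n\<close> in \<open>A\<close> converging to both \<open>a\<close> and \<open>b\<close>.
  The sets \<open>K\<^sub>n = \<up>({a} \<union> {x\<^sub>m | m \<ge> n}) \<inter> \<up>({b} \<union> {x\<^sub>m | m \<ge> n})\<close> are compact saturated by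
  coherence, decrease, and intersect to \<open>\<up>a \<inter> \<up>b\<close>. If \<open>\<up>a \<inter> \<up>b\<close> missed \<open>A\<close>,
  \<open>\<omega>\<close>-well-filteredness would give some \<open>K\<^sub>n\<close> disjoint from \<open>A\<close>, although \<open>x\<^sub>n \<in> K\<^sub>n \<inter> A\<close>.
\<close>

lemma spec_le_refl: "x \<in> topspace X \<Longrightarrow> spec_le X x x"
  using closure_of_subset[of "{x}" X] by (auto simp: spec_le_def)

lemma spec_le_trans:
  assumes "spec_le X x y" "spec_le X y z"
  shows "spec_le X x z"
proof -
  have "X closure_of {y} \<subseteq> X closure_of {z}"
    using assms(2) by (intro closure_of_minimal) (auto simp: spec_le_def)
  then show ?thesis
    using assms by (auto simp: spec_le_def)
qed

lemma openin_spec_le_upward: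
  assumes "openin X U" "x \<in> U" "spec_le X x y"
  shows "y \<in> U"
proof (rule ccontr)
  assume "y \<notin> U"
  then have "X closure_of {y} \<subseteq> topspace X - U"
    using assms(1,3) by (intro closure_of_minimal) (auto simp: spec_le_def)
  then show False
    using assms(2,3) by (auto simp: spec_le_def)
qed

definition spec_up :: "'a topology \<Rightarrow> 'a set \<Rightarrow> 'a set" where
  "spec_up X S = {y \<in> topspace X. \<exists>s\<in>S. spec_le X s y}"

lemma spec_up_subset: "S \<subseteq> topspace X \<Longrightarrow> S \<subseteq> spec_up X S"
  by (auto simp: spec_up_def intro: spec_le_refl)

lemma saturated_in_spec_up: "saturated_in X (spec_up X S)"
  unfolding saturated_in_def spec_up_def
  by (blast intro: spec_le_trans dest: spec_le_def[THEN iffD1])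

lemma saturated_in_Int: "saturated_in X A \<Longrightarrow> saturated_in X B \<Longrightarrow> saturated_in X (A \<inter> B)"
  unfolding saturated_in_def by blast

lemma compactin_spec_up:
  assumes "compactin X S"
  shows "compactin X (spec_up X S)"
  unfolding compactin_def
proof (intro conjI strip)
  show "spec_up X S \<subseteq> topspace X"
    by (auto simp: spec_up_def)
next
  fix \<U> assume \<U>: "(\<forall>U\<in>\<U>. openin X U) \<and> spec_up X S \<subseteq> \<Union>\<U>"
  have "S \<subseteq> spec_up X S"
    using assms compactin_subset_topspace spec_up_subset by metis
  with \<U> have "S \<subseteq> \<Union>\<U>"
    by (meson subset_trans)
  with \<U> obtain \<F> where \<F>: "finite \<F>" "\<F> \<subseteq> \<U>" "S \<subseteq> \<Union>\<F>"
    using assms unfolding compactin_def by meson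
  have "spec_up X S \<subseteq> \<Union>\<F>"
  proof
    fix y assume "y \<in> spec_up X S"
    then obtain s where "s \<in> S" "spec_le X s y"
      by (auto simp: spec_up_def)
    moreover from \<open>s \<in> S\<close> \<F>(3) obtain U where "U \<in> \<F>" "s \<in> U"
      by blast
    moreover from \<open>U \<in> \<F>\<close> \<F>(2) \<U> have "openin X U"
      by blast
    ultimately have "y \<in> U"
      using openin_spec_le_upward by metis
    with \<open>U \<in> \<F>\<close> show "y \<in> \<Union>\<F>"
      by blast
  qed
  with \<F> show "\<exists>\<F>. finite \<F> \<and> \<F> \<subseteq> \<U> \<and> spec_up X S \<subseteq> \<Union>\<F>"
    by blast
qed

lemma limitin_spec_le_if_frequently:
  assumes lim: "limitin X x a sequentially" and y: "y \<in> topspace X"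
    and freq: "\<exists>\<^sub>F n in sequentially. spec_le X (x n) y"
  shows "spec_le X a y"
proof -
  have a: "a \<in> topspace X"
    using lim limitin_topspace by metis
  have "y \<in> T" if "a \<in> T" "openin X T" for T
  proof -
    have "\<forall>\<^sub>F n in sequentially. x n \<in> T"
      using lim that unfolding limitin_def by blast
    with freq have "\<exists>\<^sub>F n in sequentially. spec_le X (x n) y \<and> x n \<in> T"
      by (rule frequently_eventually_frequently)
    then show "y \<in> T"
      using openin_spec_le_upward[OF \<open>openin X T\<close>] frequently_ex by blast
  qed
  then have "a \<in> X closure_of {y}"
    using a by (auto simp: in_closure_of)
  then show ?thesis
    using a y by (simp add: spec_le_def)
qed

lemma Inter_spec_up_tails:
  assumes "limitin X x a sequentially"
  shows "(\<Inter>n. spec_up X (insert a (x ` {n..}))) = spec_up X {a}"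
proof
  show "spec_up X {a} \<subseteq> (\<Inter>n. spec_up X (insert a (x ` {n..})))"
    by (auto simp: spec_up_def)
next
  show "(\<Inter>n. spec_up X (insert a (x ` {n..}))) \<subseteq> spec_up X {a}"
  proof
    fix y assume "y \<in> (\<Inter>n. spec_up X (insert a (x ` {n..})))"
    then have "y \<in> topspace X" and "spec_le X a y \<or> (\<forall>n. \<exists>m\<ge>n. spec_le X (x m) y)"
      by (auto simp: spec_up_def)
    then show "y \<in> spec_up X {a}"
      using limitin_spec_le_if_frequently[OF assms]
      by (auto simp: spec_up_def frequently_sequentially)
  qed
qed

lemma eventually_in_open_above_two_limits:
  assumes wf: "omega_well_filtered X" and coh: "coherent_space X"
    and x: "range x \<subseteq> topspace X"
    and la: "limitin X x a sequentially" and lb: "limitin X x b sequentially"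
    and U: "openin X U" "spec_up X {a} \<inter> spec_up X {b} \<subseteq> U"
  shows "\<forall>\<^sub>F n in sequentially. x n \<in> U"
proof -
  define K where
    "K n = spec_up X (insert a (x ` {n..})) \<inter> spec_up X (insert b (x ` {n..}))" for n
  have K_antimono: "K m \<subseteq> K n" if "n \<le> m" for m n
    using that by (auto simp: K_def spec_up_def)
  have "compactin X (K n) \<and> saturated_in X (K n)" for n
  proof -
    have tail: "x ` {n..} \<subseteq> range x" "x ` {n..} \<subseteq> topspace X"
      using x by auto
    have "compactin X (spec_up X (insert c (x ` {n..}))) \<and>
        saturated_in X (spec_up X (insert c (x ` {n..})))"
      if "limitin X x c sequentially" for c
      using compactin_spec_up[OF compactin_sequence_with_limit[OF that tail]]
        saturated_in_spec_up by blast
    from this[OF la] this[OF lb] show ?thesis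
      unfolding K_def using coh by (simp add: coherent_space_def saturated_in_Int)
  qed
  moreover have "\<exists>C\<in>range K. C \<subseteq> K i \<inter> K j" for i j
    using K_antimono[of i "max i j"] K_antimono[of j "max i j"] by auto
  ultimately have "filtered_compact_saturated X (range K)"
    unfolding filtered_compact_saturated_def by blast
  moreover have "\<Inter>(range K) = spec_up X {a} \<inter> spec_up X {b}"
    using Inter_spec_up_tails[OF la] Inter_spec_up_tails[OF lb] by (auto simp: K_def)
  ultimately have "\<exists>F\<in>range K. F \<subseteq> U"
    using wf[unfolded omega_well_filtered_def, rule_format, of "range K" U] U by simp
  then obtain n where "K n \<subseteq> U"
    by blast
  moreover have "x m \<in> K m" for m
    using x spec_le_refl[of "x m" X] by (force simp: K_def spec_up_def)
  ultimately have "\<forall>m\<ge>n. x m \<in> U"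
    using K_antimono by blast
  then show ?thesis
    by (auto simp: eventually_sequentially)
qed

lemma irreducible_closed_meets_Int_open:
  assumes A: "irreducible_closed X A"
    and U: "openin X U" "U \<inter> A \<noteq> {}" and V: "openin X V" "V \<inter> A \<noteq> {}"
  shows "U \<inter> V \<inter> A \<noteq> {}"
proof
  assume "U \<inter> V \<inter> A = {}"
  moreover have "A \<subseteq> topspace X"
    using A closedin_subset by (auto simp: irreducible_closed_def)
  ultimately have "A \<subseteq> (topspace X - U) \<union> (topspace X - V)"
    by auto
  moreover have "closedin X (topspace X - U)" "closedin X (topspace X - V)"
    using U V by auto
  ultimately have "A \<subseteq> topspace X - U \<or> A \<subseteq> topspace X - V"
    using A unfolding irreducible_closed_def by blast
  with U V show False
    by auto
qed

lemma irreducible_closed_in_closure_of_diagonal: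
  assumes A: "irreducible_closed X A" and "a \<in> A" "b \<in> A"
  shows "(a, b) \<in> prod_topology X X closure_of ((\<lambda>x. (x, x)) ` A)"
  unfolding in_closure_of
proof (intro conjI strip)
  show "(a, b) \<in> topspace (prod_topology X X)"
    using A assms closedin_subset by (auto simp: irreducible_closed_def)
next
  fix T assume "(a, b) \<in> T \<and> openin (prod_topology X X) T"
  then obtain U V where "openin X U" "openin X V" "a \<in> U" "b \<in> V" "U \<times> V \<subseteq> T"
    unfolding openin_prod_topology_alt by blast
  moreover from this have "U \<inter> V \<inter> A \<noteq> {}"
    using irreducible_closed_meets_Int_open[OF A] assms by blast
  ultimately show "\<exists>y. y \<in> (\<lambda>x. (x, x)) ` A \<and> y \<in> T"
    by blast
qed

lemma irreducible_closed_common_limit_sequence: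
  assumes fr: "frechet_space (prod_topology X X)"
    and A: "irreducible_closed X A" and "a \<in> A" "b \<in> A"
  obtains x where "range x \<subseteq> A" "limitin X x a sequentially" "limitin X x b sequentially"
proof -
  have "(\<lambda>x. (x, x)) ` A \<subseteq> topspace (prod_topology X X)"
    using A closedin_subset by (auto simp: irreducible_closed_def)
  then obtain f where f: "\<forall>n. f n \<in> (\<lambda>x. (x, x)) ` A"
    and lim: "limitin (prod_topology X X) f (a, b) sequentially"
    using fr irreducible_closed_in_closure_of_diagonal[OF assms(2-)]
    unfolding frechet_space_def by blast
  define x where "x = fst \<circ> f"
  have "f n = (x n, x n)" "x n \<in> A" for n
    using f[rule_format, of n] by (auto simp: x_def)
  then have "fst \<circ> f = x" "snd \<circ> f = x" "range x \<subseteq> A"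
    by (auto simp: fun_eq_iff)
  moreover have "limitin X (fst \<circ> f) a sequentially" "limitin X (snd \<circ> f) b sequentially"
    using lim unfolding limitin_pairwise by simp_all
  ultimately show thesis
    using that by simp
qed

lemma irreducible_closed_spec_directed:
  assumes wf: "omega_well_filtered X" and coh: "coherent_space X"
    and fr: "frechet_space (prod_topology X X)" and A: "irreducible_closed X A"
  shows "spec_directed X A"
proof -
  have cA: "closedin X A" and "A \<noteq> {}"
    using A by (auto simp: irreducible_closed_def)
  have sub: "A \<subseteq> topspace X"
    using cA closedin_subset by auto
  have "\<exists>c\<in>A. spec_le X a c \<and> spec_le X b c" if ab: "a \<in> A" "b \<in> A" for a b
  proof (rule ccontr)
    assume "\<not> (\<exists>c\<in>A. spec_le X a c \<and> spec_le X b c)"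
    then have "spec_up X {a} \<inter> spec_up X {b} \<subseteq> topspace X - A"
      by (auto simp: spec_up_def)
    moreover obtain x where "range x \<subseteq> A" "limitin X x a sequentially" "limitin X x b sequentially"
      using irreducible_closed_common_limit_sequence[OF fr A ab] .
    ultimately have "\<forall>\<^sub>F n in sequentially. x n \<in> topspace X - A"
      using eventually_in_open_above_two_limits[OF wf coh] sub cA by blast
    then have "\<forall>\<^sub>F n in sequentially. False"
      by (rule eventually_mono) (use \<open>range x \<subseteq> A\<close> in blast)
    then show False
      by simp
  qed
  with \<open>A \<noteq> {}\<close> sub show ?thesis
    by (auto simp: spec_directed_def)
qed

lemma d_space_closed_directed_eq_closure_of_point:
  assumes X: "d_space X" and cA: "closedin X A" and dir: "spec_directed X A"
  shows "\<exists>s\<in>topspace X. A = X closure_of {s}"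
proof -
  obtain s where s: "spec_is_sup X A s"
    using X dir by (auto simp: d_space_def spec_dcpo_def)
  have "spec_scott_open X (topspace X - A)"
    using X cA by (auto simp: d_space_def)
  with dir s have "s \<in> A"
    unfolding spec_scott_open_def spec_is_sup_def by blast
  then have "A = X closure_of {s}"
    using s cA closure_of_minimal[of "{s}" A X]
    by (auto simp: spec_is_sup_def spec_le_def)
  with s show ?thesis
    by (auto simp: spec_is_sup_def)
qed

theorem theorem3p9:
  fixes X :: "'a topology"
  assumes "d_space X"
    and "omega_well_filtered X"
    and "coherent_space X"
    and "frechet_space (prod_topology X X)"
  shows "sober_space X"
  unfolding sober_space_def
proof (intro conjI allI impI)
  show "t0_space X"
    using assms(1) by (simp add: d_space_def)
next
  fix A assume A: "irreducible_closed X A"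
  then have "closedin X A"
    by (simp add: irreducible_closed_def)
  with A show "\<exists>x\<in>topspace X. A = X closure_of {x}"
    using d_space_closed_directed_eq_closure_of_point[OF assms(1)]
      irreducible_closed_spec_directed[OF assms(2-4)] by blast
qed

end
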